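(* Fix a finite relational schema $\sigma$ and an integer $d\geq 2$. Let $\epsilon\in(0,1]$, $r\in\mathbb{N}$, and let $\mathcal{D}$ be a $\sigma$-database belonging to a class $\mathbf{C}$ of $\sigma$-databases of degree at most $d$ such that $\operatorname{h}_r(\mathbf{C})$ is semilinear, written as $\operatorname{h}_r(\mathbf{C})=M_1\cup\dots\cup M_m$ with $m\in\mathbb{N}$ and, for each $i\in[m]$, $M_i=\{\bar v_0^i+a_1\bar v_1^i+\dots+a_{k_i}\bar v_{k_i}^i\mid a_1,\dots,a_{k_i}\in\mathbb{N}\}$ where $\bar v_0^i,\dots,\bar v_{k_i}^i\in\mathbb{N}^{\operatorname{c}(r)}$. Let $c:=\operatorname{c}(r)$, $k:=\max_{i\in[m]}k_i+1$ and $v:=\max_{i\in[m]}\max_{0\leq j\leq k_i}\|\bar v_j^i\|_1$. Then there exists a $\sigma$-database $\mathcal{D}_0$ such that $\|\operatorname{dv}_r(\mathcal{D})-\operatorname{dv}_r(\mathcal{D}_0)\|_1\leq\epsilon$ and $|D_0|\leq kv\left(\frac{3ckv}{\epsilon}+2\right)$.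
   Context: A schema $\sigma$ is a finite set of relation names with arities in $\mathbb{N}_{\geq 1}$. A $\sigma$-database $\mathcal{D}$ has a finite domain $D$ and a relation $R^{\mathcal{D}}\subseteq D^{\operatorname{ar}(R)}$ for each $R\in\sigma$. The Gaifman graph has vertex set $D$ and an edge between distinct $a,b$ whenever some tuple contains both. The degree of an element is the number of tuples containing it; the degree of $\mathcal{D}$ is the maximum. $N_r(a)$ is the set of elements at Gaifman distance at most $r$ from $a$; the $r$-neighbourhood of $a$ is $(\mathcal{D}[N_r(a)],a)$ (induced sub-database with centre $a$); an $r$-type is a centre-preserving isomorphism class of $r$-neighbourhoods; $\operatorname{c}(r)$ is the number of $r$-types of degree at most $d$ over $\sigma$. $\operatorname{h}_r(\mathcal{D})\in\mathbb{N}^{\operatorname{c}(r)}$ counts the elements of each $r$-type; $\operatorname{dv}_r(\mathcal{D})=\operatorname{h}_r(\mathcal{D})/|D|$; $\operatorname{h}_r(\mathbf{C})=\{\operatorname{h}_r(\mathcal{D})\mid\mathcal{D}\in\mathbf{C}\}$. A set is semilinear if it is a finite union of linear sets $\{\bar v_0+\sum a_j\bar v_j\mid a_j\in\mathbb{N}\}$. *)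

theory Defs
  imports Complex_Main
begin

text \<open>Relation names have type 'r; a schema is a finite set
  sigma of relation names together with an arity function ar. Database elements are
  natural numbers (every finite database is isomorphic to one of this form).\<close>

record 'r db =
  dbdom :: "nat set"
  dbrel :: "'r \<Rightarrow> nat list set"

definition wf_db :: "'r set \<Rightarrow> ('r \<Rightarrow> nat) \<Rightarrow> 'r db \<Rightarrow> bool" where
  "wf_db \<sigma> ar D \<longleftrightarrow> finite (dbdom D) \<and>
     (\<forall>R. R \<notin> \<sigma> \<longrightarrow> dbrel D R = {}) \<and>
     (\<forall>R\<in>\<sigma>. \<forall>t\<in>dbrel D R. length t = ar R \<and> set t \<subseteq> dbdom D)"

definition elem_degree :: "'r set \<Rightarrow> 'r db \<Rightarrow> nat \<Rightarrow> nat" where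
  "elem_degree \<sigma> D a = card {(R, t). R \<in> \<sigma> \<and> t \<in> dbrel D R \<and> a \<in> set t}"

definition db_degree :: "'r set \<Rightarrow> 'r db \<Rightarrow> nat" where
  "db_degree \<sigma> D = Max (insert 0 (elem_degree \<sigma> D ` dbdom D))"

definition gaifman :: "'r set \<Rightarrow> 'r db \<Rightarrow> (nat \<times> nat) set" where
  "gaifman \<sigma> D = {(a, b). a \<noteq> b \<and> (\<exists>R\<in>\<sigma>. \<exists>t\<in>dbrel D R. a \<in> set t \<and> b \<in> set t)}"

definition ball_r :: "'r set \<Rightarrow> nat \<Rightarrow> 'r db \<Rightarrow> nat \<Rightarrow> nat set" where
  "ball_r \<sigma> r D a = {b \<in> dbdom D. \<exists>n\<le>r. (a, b) \<in> (gaifman \<sigma> D) ^^ n}"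

definition induced :: "'r db \<Rightarrow> nat set \<Rightarrow> 'r db" where
  "induced D S = \<lparr>dbdom = S, dbrel = (\<lambda>R. {t \<in> dbrel D R. set t \<subseteq> S})\<rparr>"

definition nbhd :: "'r set \<Rightarrow> nat \<Rightarrow> 'r db \<Rightarrow> nat \<Rightarrow> 'r db \<times> nat" where
  "nbhd \<sigma> r D a = (induced D (ball_r \<sigma> r D a), a)"

definition piso :: "'r db \<times> nat \<Rightarrow> 'r db \<times> nat \<Rightarrow> bool" where
  "piso P Q \<longleftrightarrow> (\<exists>f. bij_betw f (dbdom (fst P)) (dbdom (fst Q)) \<and> f (snd P) = snd Q \<and>
     (\<forall>R. map f ` dbrel (fst P) R = dbrel (fst Q) R))"

definition rtype :: "'r set \<Rightarrow> ('r \<Rightarrow> nat) \<Rightarrow> nat \<Rightarrow> 'r db \<Rightarrow> nat \<Rightarrow> ('r db \<times> nat) set" where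
  "rtype \<sigma> ar r D a = {P. wf_db \<sigma> ar (fst P) \<and> snd P \<in> dbdom (fst P) \<and> piso P (nbhd \<sigma> r D a)}"

definition rtypes :: "'r set \<Rightarrow> ('r \<Rightarrow> nat) \<Rightarrow> nat \<Rightarrow> nat \<Rightarrow> ('r db \<times> nat) set set" where
  "rtypes \<sigma> ar d r = {rtype \<sigma> ar r D a | D a. wf_db \<sigma> ar D \<and> a \<in> dbdom D \<and>
       db_degree \<sigma> (fst (nbhd \<sigma> r D a)) \<le> d}"

definition ctypes :: "'r set \<Rightarrow> ('r \<Rightarrow> nat) \<Rightarrow> nat \<Rightarrow> nat \<Rightarrow> nat" where
  "ctypes \<sigma> ar d r = card (rtypes \<sigma> ar d r)"

definition hvec :: "'r set \<Rightarrow> ('r \<Rightarrow> nat) \<Rightarrow> nat \<Rightarrow> 'r db \<Rightarrow> ('r db \<times> nat) set \<Rightarrow> nat" where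
  "hvec \<sigma> ar r D \<tau> = card {a \<in> dbdom D. rtype \<sigma> ar r D a = \<tau>}"

definition dvec :: "'r set \<Rightarrow> ('r \<Rightarrow> nat) \<Rightarrow> nat \<Rightarrow> 'r db \<Rightarrow> ('r db \<times> nat) set \<Rightarrow> real" where
  "dvec \<sigma> ar r D \<tau> = real (hvec \<sigma> ar r D \<tau>) / real (card (dbdom D))"

end

theory Submission imports Defs begin

text \<open>Write \<open>h\<^sub>r(\<D>) = v\<^sub>0 + a\<^sub>1 v\<^sub>1 + \<dots> + a\<^sub>K v\<^sub>K\<close> using one linear set of the semilinear
  decomposition. If \<open>\<D>\<close> has \<open>n \<le> 2kv/\<epsilon>\<close> elements, \<open>\<D>\<^sub>0 = \<D>\<close> will do. Otherwise shrink the
  coefficients to \<open>b\<^sub>j = \<lfloor>t a\<^sub>j\<rfloor>\<close> with \<open>t = 2kv/(\<epsilon> n) < 1\<close>. The vector \<open>v\<^sub>0 + \<Sum> b\<^sub>j v\<^sub>j\<close> lies in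
  the same linear set, hence is \<open>h\<^sub>r(\<D>\<^sub>0)\<close> for some \<open>\<D>\<^sub>0 \<in> \<C>\<close>; it has \<open>\<ell>\<^sub>1\<close>-norm at most
  \<open>v + t n\<close>, and differs from \<open>t h\<^sub>r(\<D>)\<close> by at most \<open>kv\<close> in \<open>\<ell>\<^sub>1\<close>-norm, so after normalisation
  the two distributions are \<open>2kv/(t n) = \<epsilon>\<close>-close. In both cases \<open>|D\<^sub>0| \<le> v + 2kv/\<epsilon>\<close>, which is
  below the stated bound.\<close>

definition lincomb :: "(nat \<Rightarrow> 'a \<Rightarrow> nat) \<Rightarrow> nat \<Rightarrow> (nat \<Rightarrow> nat) \<Rightarrow> 'a \<Rightarrow> nat" where
  "lincomb u K a = (\<lambda>\<tau>. u 0 \<tau> + (\<Sum>j\<in>{1..K}. a j * u j \<tau>))"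

lemma sum_lincomb:
  "(\<Sum>\<tau>\<in>T. lincomb u K a \<tau>) = (\<Sum>\<tau>\<in>T. u 0 \<tau>) + (\<Sum>j\<in>{1..K}. a j * (\<Sum>\<tau>\<in>T. u j \<tau>))"
  by (simp add: lincomb_def sum.distrib sum_distrib_left sum.swap[of _ T])

lemma sum_lincomb_le:
  assumes "\<forall>j\<le>K. (\<Sum>\<tau>\<in>T. u j \<tau>) \<le> v"
  shows "(\<Sum>\<tau>\<in>T. lincomb u K (\<lambda>_. 1) \<tau>) \<le> (K + 1) * v"
proof -
  have "(\<Sum>\<tau>\<in>T. lincomb u K (\<lambda>_. 1) \<tau>) \<le> v + (\<Sum>j\<in>{1..K}. v)"
    unfolding sum_lincomb using assms by (intro add_mono sum_mono) auto
  then show ?thesis by simp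
qed

lemma abs_rescale_lincomb_le:
  fixes t :: real
  assumes "0 \<le> t" "t \<le> 1" and close: "\<forall>j. \<bar>t * real (a j) - real (b j)\<bar> \<le> 1"
  shows "\<bar>t * real (lincomb u K a \<tau>) - real (lincomb u K b \<tau>)\<bar> \<le> real (lincomb u K (\<lambda>_. 1) \<tau>)"
proof -
  have "t * real (lincomb u K a \<tau>) - real (lincomb u K b \<tau>)
      = (t - 1) * real (u 0 \<tau>) + (\<Sum>j\<in>{1..K}. (t * real (a j) - real (b j)) * real (u j \<tau>))"
    by (simp add: lincomb_def algebra_simps sum_distrib_left sum_subtractf)
  also have "\<bar>\<dots>\<bar> \<le> \<bar>t - 1\<bar> * real (u 0 \<tau>) + (\<Sum>j\<in>{1..K}. \<bar>t * real (a j) - real (b j)\<bar> * real (u j \<tau>))"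
    by (rule order.trans[OF abs_triangle_ineq add_mono])
       (auto simp: abs_mult intro: order.trans[OF sum_abs])
  also have "\<dots> \<le> 1 * real (u 0 \<tau>) + (\<Sum>j\<in>{1..K}. 1 * real (u j \<tau>))"
    using assms by (intro add_mono sum_mono mult_right_mono) auto
  finally show ?thesis by (simp add: lincomb_def)
qed

lemma sum_abs_rescale_lincomb_le:
  fixes t :: real
  assumes "0 \<le> t" "t \<le> 1" "\<forall>j. \<bar>t * real (a j) - real (b j)\<bar> \<le> 1"
    and N: "\<forall>j\<le>K. (\<Sum>\<tau>\<in>T. u j \<tau>) \<le> v" and "K < k"
  shows "(\<Sum>\<tau>\<in>T. \<bar>t * real (lincomb u K a \<tau>) - real (lincomb u K b \<tau>)\<bar>) \<le> real k * real v"
proof -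
  have "(\<Sum>\<tau>\<in>T. \<bar>t * real (lincomb u K a \<tau>) - real (lincomb u K b \<tau>)\<bar>)
      \<le> real (\<Sum>\<tau>\<in>T. lincomb u K (\<lambda>_. 1) \<tau>)"
    unfolding of_nat_sum using assms(1-3) by (intro sum_mono abs_rescale_lincomb_le) auto
  also have "\<dots> \<le> real ((K + 1) * v)" using sum_lincomb_le[OF N] by (simp only: of_nat_le_iff)
  also have "\<dots> \<le> real k * real v"
    using \<open>K < k\<close> by (metis Suc_eq_plus1 Suc_leI mult_le_mono1 of_nat_le_iff of_nat_mult)
  finally show ?thesis .
qed

lemma sum_lincomb_rescale_le:
  fixes t :: real
  assumes "0 \<le> t" and "\<forall>j. real (b j) \<le> t * real (a j)"
  shows "real (\<Sum>\<tau>\<in>T. lincomb u K b \<tau>) \<le> real (\<Sum>\<tau>\<in>T. u 0 \<tau>) + t * real (\<Sum>\<tau>\<in>T. lincomb u K a \<tau>)"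
proof -
  define N where "N j = real (\<Sum>\<tau>\<in>T. u j \<tau>)" for j
  have "(\<Sum>j\<in>{1..K}. real (b j) * N j) \<le> (\<Sum>j\<in>{1..K}. t * real (a j) * N j)"
    using assms by (intro sum_mono mult_right_mono) (auto simp: N_def simp del: of_nat_sum)
  also have "\<dots> = t * (\<Sum>j\<in>{1..K}. real (a j) * N j)"
    by (simp add: sum_distrib_left mult.assoc)
  also have "\<dots> \<le> t * (N 0 + (\<Sum>j\<in>{1..K}. real (a j) * N j))"
    using assms(1) by (intro mult_left_mono) (auto simp: N_def simp del: of_nat_sum)
  finally show ?thesis
    by (simp add: sum_lincomb N_def)
qed

lemma sum_abs_diff_normalized_le:
  fixes x y :: "'a \<Rightarrow> real"
  assumes T: "finite T" and x0: "\<forall>\<tau>\<in>T. 0 \<le> x \<tau>" and y0: "\<forall>\<tau>\<in>T. 0 \<le> y \<tau>"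
    and X: "0 < sum x T"
  shows "(\<Sum>\<tau>\<in>T. \<bar>x \<tau> / sum x T - y \<tau> / sum y T\<bar>) \<le> 2 * (\<Sum>\<tau>\<in>T. \<bar>x \<tau> - y \<tau>\<bar>) / sum x T"
proof (cases "sum y T = 0")
  case True
  then have yz: "\<forall>\<tau>\<in>T. y \<tau> = 0" using sum_nonneg_eq_0_iff[OF T] y0 by blast
  have "(\<Sum>\<tau>\<in>T. \<bar>x \<tau> / sum x T - y \<tau> / sum y T\<bar>) = (\<Sum>\<tau>\<in>T. x \<tau> / sum x T)"
    using yz x0 X by (intro sum.cong) auto
  also have "\<dots> = 1" using X by (simp add: sum_divide_distrib[symmetric])
  also have "(\<Sum>\<tau>\<in>T. \<bar>x \<tau> - y \<tau>\<bar>) = sum x T" using yz x0 by (intro sum.cong) auto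
  ultimately show ?thesis using X by simp
next
  case False
  define X Y where "X = sum x T" and "Y = sum y T"
  have Xp: "X > 0" and Yp: "Y > 0"
    using X False sum_nonneg[of T y] y0 unfolding X_def Y_def by force+
  have "\<bar>x \<tau> / X - y \<tau> / Y\<bar> \<le> \<bar>x \<tau> - y \<tau>\<bar> / X + y \<tau> / Y * (\<bar>Y - X\<bar> / X)" if "\<tau> \<in> T" for \<tau>
  proof -
    have "x \<tau> / X - y \<tau> / Y = (x \<tau> - y \<tau>) / X + y \<tau> / Y * ((Y - X) / X)"
      using Xp Yp by (simp add: field_simps)
    then have "\<bar>x \<tau> / X - y \<tau> / Y\<bar> \<le> \<bar>(x \<tau> - y \<tau>) / X\<bar> + \<bar>y \<tau> / Y * ((Y - X) / X)\<bar>"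
      by (metis abs_triangle_ineq)
    also have "\<dots> = \<bar>x \<tau> - y \<tau>\<bar> / X + y \<tau> / Y * (\<bar>Y - X\<bar> / X)"
      using Xp Yp y0 that by (simp add: abs_mult abs_divide)
    finally show ?thesis .
  qed
  then have "(\<Sum>\<tau>\<in>T. \<bar>x \<tau> / X - y \<tau> / Y\<bar>) \<le> (\<Sum>\<tau>\<in>T. \<bar>x \<tau> - y \<tau>\<bar> / X + y \<tau> / Y * (\<bar>Y - X\<bar> / X))"
    by (rule sum_mono)
  also have "\<dots> = (\<Sum>\<tau>\<in>T. \<bar>x \<tau> - y \<tau>\<bar>) / X + \<bar>Y - X\<bar> / X"
    using Yp by (simp add: sum.distrib sum_divide_distrib[symmetric] sum_distrib_right[symmetric] Y_def)
  also have "\<bar>Y - X\<bar> \<le> (\<Sum>\<tau>\<in>T. \<bar>x \<tau> - y \<tau>\<bar>)"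
    using sum_abs[of "\<lambda>\<tau>. x \<tau> - y \<tau>" T] by (simp add: X_def Y_def sum_subtractf abs_minus_commute)
  finally show ?thesis
    using Xp unfolding X_def Y_def by (simp add: divide_right_mono add_divide_distrib[symmetric])
qed

lemma sum_abs_diff_normalized_rescale_le:
  fixes x y :: "'a \<Rightarrow> real" and t :: real
  assumes "finite T" "\<forall>\<tau>\<in>T. 0 \<le> x \<tau>" "\<forall>\<tau>\<in>T. 0 \<le> y \<tau>" "0 < sum x T" "0 < t"
  shows "(\<Sum>\<tau>\<in>T. \<bar>x \<tau> / sum x T - y \<tau> / sum y T\<bar>) \<le> 2 * (\<Sum>\<tau>\<in>T. \<bar>t * x \<tau> - y \<tau>\<bar>) / (t * sum x T)"
proof -
  have "(\<Sum>\<tau>\<in>T. \<bar>x \<tau> / sum x T - y \<tau> / sum y T\<bar>)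
      = (\<Sum>\<tau>\<in>T. \<bar>t * x \<tau> / (\<Sum>\<tau>'\<in>T. t * x \<tau>') - y \<tau> / sum y T\<bar>)"
    using assms(5) by (simp add: sum_distrib_left[symmetric])
  also have "\<dots> \<le> 2 * (\<Sum>\<tau>\<in>T. \<bar>t * x \<tau> - y \<tau>\<bar>) / (\<Sum>\<tau>'\<in>T. t * x \<tau>')"
    using assms by (intro sum_abs_diff_normalized_le) (auto simp: sum_distrib_left[symmetric])
  finally show ?thesis by (simp add: sum_distrib_left)
qed

lemma lincomb_floor_rescale:
  fixes \<epsilon> :: real
  assumes T: "finite T" and \<epsilon>: "0 < \<epsilon>"
    and N: "\<forall>j\<le>K. (\<Sum>\<tau>\<in>T. u j \<tau>) \<le> v" and "K < k"
    and large: "2 * real k * real v / \<epsilon> < real (\<Sum>\<tau>\<in>T. lincomb u K a \<tau>)"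
  obtains b where
    "(\<Sum>\<tau>\<in>T. \<bar>real (lincomb u K a \<tau>) / real (\<Sum>\<tau>'\<in>T. lincomb u K a \<tau>')
                - real (lincomb u K b \<tau>) / real (\<Sum>\<tau>'\<in>T. lincomb u K b \<tau>')\<bar>) \<le> \<epsilon>"
    "real (\<Sum>\<tau>\<in>T. lincomb u K b \<tau>) \<le> real v + 2 * real k * real v / \<epsilon>"
proof -
  define x where "x \<tau> = real (lincomb u K a \<tau>)" for \<tau>
  define n where "n = sum x T"
  have n_eq: "n = real (\<Sum>\<tau>\<in>T. lincomb u K a \<tau>)" unfolding n_def x_def by simp
  have "0 \<le> 2 * real k * real v / \<epsilon>" using \<epsilon> by simp
  then have n_pos: "0 < n" using large n_eq by linarith
  have "v > 0"
  proof (rule ccontr)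
    assume "\<not> v > 0"
    then have "n = 0" using N unfolding n_def x_def of_nat_sum[symmetric] sum_lincomb by simp
    then show False using n_pos by simp
  qed
  define t where "t = 2 * real k * real v / (\<epsilon> * n)"
  have t_pos: "0 < t" using \<open>v > 0\<close> \<open>K < k\<close> \<epsilon> n_pos unfolding t_def by simp
  have tn: "t * n = 2 * real k * real v / \<epsilon>" using n_pos unfolding t_def by simp
  have "t * n < 1 * n" using tn large n_eq by simp
  then have t_le1: "t \<le> 1" using n_pos by (simp add: mult_less_cancel_right)
  define b where "b j = nat \<lfloor>t * real (a j)\<rfloor>" for j
  have b_le: "real (b j) \<le> t * real (a j)" and b_close: "\<bar>t * real (a j) - real (b j)\<bar> \<le> 1" for j
    using t_pos by (auto simp: b_def of_nat_nat) linarith+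
  define y where "y \<tau> = real (lincomb u K b \<tau>)" for \<tau>
  have deviation: "(\<Sum>\<tau>\<in>T. \<bar>t * x \<tau> - y \<tau>\<bar>) \<le> real k * real v"
    unfolding x_def y_def using t_pos t_le1 b_close N \<open>K < k\<close> by (intro sum_abs_rescale_lincomb_le) auto
  have "(\<Sum>\<tau>\<in>T. \<bar>x \<tau> / n - y \<tau> / sum y T\<bar>) \<le> 2 * (\<Sum>\<tau>\<in>T. \<bar>t * x \<tau> - y \<tau>\<bar>) / (t * n)"
    unfolding n_def using T t_pos n_pos
    by (intro sum_abs_diff_normalized_rescale_le) (auto simp: x_def y_def n_def)
  also have "\<dots> \<le> 2 * (real k * real v) / (t * n)"
    using deviation t_pos n_pos by (simp add: divide_right_mono)
  also have "\<dots> = \<epsilon>" using tn t_pos n_pos \<epsilon> by (simp add: field_simps)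
  finally have "(\<Sum>\<tau>\<in>T. \<bar>x \<tau> / n - y \<tau> / sum y T\<bar>) \<le> \<epsilon>" .
  moreover have "real (\<Sum>\<tau>\<in>T. lincomb u K b \<tau>) \<le> real v + 2 * real k * real v / \<epsilon>"
  proof -
    have "real (\<Sum>\<tau>\<in>T. lincomb u K b \<tau>) \<le> real (\<Sum>\<tau>\<in>T. u 0 \<tau>) + t * n"
      unfolding n_eq using t_pos b_le by (intro sum_lincomb_rescale_le) auto
    moreover have "real (\<Sum>\<tau>\<in>T. u 0 \<tau>) \<le> real v" using N by (simp del: of_nat_sum)
    ultimately show ?thesis using tn by linarith
  qed
  ultimately show thesis
    using that[of b] unfolding n_eq by (simp add: x_def y_def)
qed

lemma finite_dbrel:
  assumes "wf_db \<sigma> ar E" "R \<in> \<sigma>"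
  shows "finite (dbrel E R)"
proof (rule finite_subset)
  show "dbrel E R \<subseteq> {t. set t \<subseteq> dbdom E \<and> length t = ar R}"
    using assms unfolding wf_db_def by auto
  show "finite {t. set t \<subseteq> dbdom E \<and> length t = ar R}"
    using assms finite_lists_length_eq unfolding wf_db_def by blast
qed

lemma wf_db_empty: "wf_db \<sigma> ar \<lparr>dbdom = {}, dbrel = \<lambda>R. {}\<rparr>"
  unfolding wf_db_def by simp

lemma db_degree_empty: "db_degree \<sigma> \<lparr>dbdom = {}, dbrel = \<lambda>R. {}\<rparr> = 0"
  unfolding db_degree_def by simp

lemma db_degree_nbhd_le:
  assumes \<sigma>: "finite \<sigma>" and wf: "wf_db \<sigma> ar E"
  shows "db_degree \<sigma> (fst (nbhd \<sigma> r E a)) \<le> db_degree \<sigma> E"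
proof -
  define S where "S = ball_r \<sigma> r E a"
  have SE: "S \<subseteq> dbdom E" unfolding S_def ball_r_def by auto
  have finE: "finite (dbdom E)" using wf unfolding wf_db_def by auto
  have "elem_degree \<sigma> (induced E S) b \<le> db_degree \<sigma> E" if "b \<in> S" for b
  proof -
    have "finite {(R, t). R \<in> \<sigma> \<and> t \<in> dbrel E R \<and> b \<in> set t}"
      by (rule finite_subset[of _ "Sigma \<sigma> (dbrel E)"]) (auto intro!: finite_SigmaI \<sigma> finite_dbrel[OF wf])
    then have "elem_degree \<sigma> (induced E S) b \<le> elem_degree \<sigma> E b"
      unfolding elem_degree_def induced_def by (rule card_mono) auto
    also have "\<dots> \<le> db_degree \<sigma> E"
      unfolding db_degree_def using that SE finE by (intro Max_ge) auto
    finally show ?thesis .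
  qed
  moreover have "finite S" using SE finE by (rule finite_subset)
  moreover have "db_degree \<sigma> (induced E S) = Max (insert 0 (elem_degree \<sigma> (induced E S) ` S))"
    unfolding db_degree_def by (simp add: induced_def)
  ultimately show ?thesis
    unfolding nbhd_def S_def[symmetric] by simp
qed

lemma card_dbdom_eq_sum_hvec:
  assumes \<sigma>: "finite \<sigma>" and wf: "wf_db \<sigma> ar E" and deg: "db_degree \<sigma> E \<le> d"
    and T: "finite (rtypes \<sigma> ar d r)"
  shows "card (dbdom E) = (\<Sum>\<tau>\<in>rtypes \<sigma> ar d r. hvec \<sigma> ar r E \<tau>)"
proof -
  have "rtype \<sigma> ar r E a \<in> rtypes \<sigma> ar d r" if "a \<in> dbdom E" for a
    unfolding rtypes_def using that wf db_degree_nbhd_le[OF \<sigma> wf, of r a] deg by fastforce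
  then have "dbdom E = (\<Union>\<tau>\<in>rtypes \<sigma> ar d r. {a \<in> dbdom E. rtype \<sigma> ar r E a = \<tau>})"
    by auto
  also have "card \<dots> = (\<Sum>\<tau>\<in>rtypes \<sigma> ar d r. card {a \<in> dbdom E. rtype \<sigma> ar r E a = \<tau>})"
    using T wf unfolding wf_db_def by (intro card_UN_disjoint) auto
  finally show ?thesis unfolding hvec_def .
qed

lemma dvec_eq_normalized_hvec:
  assumes "finite \<sigma>" "wf_db \<sigma> ar E" "db_degree \<sigma> E \<le> d" "finite (rtypes \<sigma> ar d r)"
  shows "dvec \<sigma> ar r E \<tau> = real (hvec \<sigma> ar r E \<tau>) / real (\<Sum>\<tau>'\<in>rtypes \<sigma> ar d r. hvec \<sigma> ar r E \<tau>')"
  unfolding dvec_def card_dbdom_eq_sum_hvec[OF assms] ..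

lemma exists_small_db_close_in_dvec:
  fixes \<epsilon> :: real
  assumes \<sigma>: "finite \<sigma>" and T: "finite (rtypes \<sigma> ar d r)"
    and C: "\<forall>E\<in>C. wf_db \<sigma> ar E \<and> db_degree \<sigma> E \<le> d"
    and "D \<in> C" and hD: "hvec \<sigma> ar r D = lincomb u K a"
    and closed: "\<forall>b. lincomb u K b \<in> hvec \<sigma> ar r ` C"
    and N: "\<forall>j\<le>K. (\<Sum>\<tau>\<in>rtypes \<sigma> ar d r. u j \<tau>) \<le> v" and "K < k" and \<epsilon>: "0 < \<epsilon>"
  obtains D0 where "D0 \<in> C"
    "(\<Sum>\<tau>\<in>rtypes \<sigma> ar d r. \<bar>dvec \<sigma> ar r D \<tau> - dvec \<sigma> ar r D0 \<tau>\<bar>) \<le> \<epsilon>"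
    "real (card (dbdom D0)) \<le> real v + 2 * real k * real v / \<epsilon>"
proof (cases "real (card (dbdom D)) \<le> 2 * real k * real v / \<epsilon>")
  case True
  then show thesis using \<open>D \<in> C\<close> \<epsilon> by (intro that[of D]) auto
next
  case False
  have card: "card (dbdom E) = (\<Sum>\<tau>\<in>rtypes \<sigma> ar d r. hvec \<sigma> ar r E \<tau>)"
    and dvec: "dvec \<sigma> ar r E = (\<lambda>\<tau>. real (hvec \<sigma> ar r E \<tau>) / real (\<Sum>\<tau>'\<in>rtypes \<sigma> ar d r. hvec \<sigma> ar r E \<tau>'))"
    if "E \<in> C" for E
    using C that card_dbdom_eq_sum_hvec[OF \<sigma> _ _ T] dvec_eq_normalized_hvec[OF \<sigma> _ _ T] by blast+
  have "2 * real k * real v / \<epsilon> < real (\<Sum>\<tau>\<in>rtypes \<sigma> ar d r. lincomb u K a \<tau>)"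
    using False unfolding card[OF \<open>D \<in> C\<close>] hD by simp
  then obtain b where close:
    "(\<Sum>\<tau>\<in>rtypes \<sigma> ar d r. \<bar>real (lincomb u K a \<tau>) / real (\<Sum>\<tau>'\<in>rtypes \<sigma> ar d r. lincomb u K a \<tau>')
        - real (lincomb u K b \<tau>) / real (\<Sum>\<tau>'\<in>rtypes \<sigma> ar d r. lincomb u K b \<tau>')\<bar>) \<le> \<epsilon>"
    and small: "real (\<Sum>\<tau>\<in>rtypes \<sigma> ar d r. lincomb u K b \<tau>) \<le> real v + 2 * real k * real v / \<epsilon>"
    by (rule lincomb_floor_rescale[OF T \<epsilon> N \<open>K < k\<close>])
  obtain D0 where D0: "D0 \<in> C" and hD0: "hvec \<sigma> ar r D0 = lincomb u K b"
    using closed by (metis imageE)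
  show thesis
  proof (rule that[OF D0])
    show "(\<Sum>\<tau>\<in>rtypes \<sigma> ar d r. \<bar>dvec \<sigma> ar r D \<tau> - dvec \<sigma> ar r D0 \<tau>\<bar>) \<le> \<epsilon>"
      using close unfolding dvec[OF \<open>D \<in> C\<close>] dvec[OF D0] hD hD0 .
    show "real (card (dbdom D0)) \<le> real v + 2 * real k * real v / \<epsilon>"
      using small unfolding card[OF D0] hD0 .
  qed
qed

lemma finite_dependent_index_image:
  fixes g :: "'a \<Rightarrow> nat"
  assumes "finite I"
  shows "finite {f i j | i j. i \<in> I \<and> j \<le> g i}"
proof (rule finite_subset)
  show "{f i j | i j. i \<in> I \<and> j \<le> g i} \<subseteq> (\<Union>i\<in>I. f i ` {..g i})" by blast
qed (intro finite_UN_I assms finite_imageI finite_atMost)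

lemma le_size_bound:
  fixes \<epsilon> :: real
  assumes \<epsilon>: "0 < \<epsilon>" and "0 < k" and c: "0 < v \<Longrightarrow> 0 < c"
  shows "real v + 2 * real k * real v / \<epsilon> \<le> real (k * v) * (3 * real c * real k * real v / \<epsilon> + 2)"
proof (cases "v = 0")
  case False
  then have "1 \<le> c * k * v" using \<open>0 < k\<close> c by (simp add: Suc_le_eq)
  then have "1 \<le> real c * real k * real v" by (metis of_nat_1 of_nat_le_iff of_nat_mult)
  then have "real k * real v * 2 \<le> real k * real v * (3 * real c * real k * real v)"
    by (intro mult_left_mono) auto
  then have "2 * real k * real v / \<epsilon> \<le> real (k * v) * (3 * real c * real k * real v / \<epsilon>)"
    using \<epsilon> by (simp add: divide_right_mono mult.assoc mult.left_commute)
  moreover have "1 * real v \<le> 2 * real k * real v" using \<open>0 < k\<close> by (intro mult_right_mono) auto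
  ultimately show ?thesis by (simp add: distrib_left)
qed simp

theorem corollary10:
  fixes \<sigma> :: "'r set" and ar :: "'r \<Rightarrow> nat" and d r m :: nat and \<epsilon> :: real
    and C :: "'r db set" and D :: "'r db"
    and ks :: "nat \<Rightarrow> nat"
    and vs :: "nat \<Rightarrow> nat \<Rightarrow> ('r db \<times> nat) set \<Rightarrow> nat"
  assumes schema: "finite \<sigma>" "\<forall>R\<in>\<sigma>. ar R \<ge> 1"
    and d2: "d \<ge> 2"
    and eps: "0 < \<epsilon>" "\<epsilon> \<le> 1"
    and classC: "\<forall>E\<in>C. wf_db \<sigma> ar E \<and> db_degree \<sigma> E \<le> d"
    and DC: "D \<in> C"
    and vecs: "\<forall>i\<in>{1..m}. \<forall>j\<le>ks i. \<forall>\<tau>. \<tau> \<notin> rtypes \<sigma> ar d r \<longrightarrow> vs i j \<tau> = 0"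
    and semilin: "hvec \<sigma> ar r ` C =
       (\<Union>i\<in>{1..m}. {(\<lambda>\<tau>. vs i 0 \<tau> + (\<Sum>j\<in>{1..ks i}. a j * vs i j \<tau>)) | a :: nat \<Rightarrow> nat. True})"
  shows "let c = ctypes \<sigma> ar d r;
             k = Max (ks ` {1..m}) + 1;
             v = Max {(\<Sum>\<tau>\<in>rtypes \<sigma> ar d r. vs i j \<tau>) | i j. i \<in> {1..m} \<and> j \<le> ks i}
         in \<exists>D0. wf_db \<sigma> ar D0 \<and> db_degree \<sigma> D0 \<le> d \<and>
              (\<Sum>\<tau>\<in>rtypes \<sigma> ar d r. \<bar>dvec \<sigma> ar r D \<tau> - dvec \<sigma> ar r D0 \<tau>\<bar>) \<le> \<epsilon> \<and>
              real (card (dbdom D0)) \<le> real (k * v) * (3 * real c * real k * real v / \<epsilon> + 2)"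
proof -
  define T where "T = rtypes \<sigma> ar d r"
  define V where "V = {(\<Sum>\<tau>\<in>T. vs i j \<tau>) | i j. i \<in> {1..m} \<and> j \<le> ks i}"
  define c k v where "c = card T" and "k = Max (ks ` {1..m}) + 1" and "v = Max V"
  from DC semilin obtain i a where i: "i \<in> {1..m}" and hD: "hvec \<sigma> ar r D = lincomb (vs i) (ks i) a"
    unfolding lincomb_def by blast
  have closed: "\<forall>b. lincomb (vs i) (ks i) b \<in> hvec \<sigma> ar r ` C"
    using i unfolding semilin lincomb_def by blast
  have "ks i < k" using i unfolding k_def by (simp add: less_Suc_eq_le)
  have "finite V" unfolding V_def by (rule finite_dependent_index_image) simp
  then have N: "\<forall>j\<le>ks i. (\<Sum>\<tau>\<in>T. vs i j \<tau>) \<le> v"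
    unfolding v_def using i by (auto simp: V_def intro!: Max_ge)
  have "V \<noteq> {}" unfolding V_def using i by blast
  then have "v \<in> V" unfolding v_def using \<open>finite V\<close> by (rule Max_in[rotated])
  show ?thesis
  proof (cases "finite T")
    case False
    \<comment> \<open>Sums over the infinite set \<open>T\<close> are 0, so the empty database will do.\<close>
    then show ?thesis
      using eps unfolding Let_def T_def[symmetric]
      by (intro exI[of _ "\<lparr>dbdom = {}, dbrel = \<lambda>R. {}\<rparr>"]) (simp add: wf_db_empty db_degree_empty)
  next
    case True
    obtain D0 where "D0 \<in> C" "(\<Sum>\<tau>\<in>T. \<bar>dvec \<sigma> ar r D \<tau> - dvec \<sigma> ar r D0 \<tau>\<bar>) \<le> \<epsilon>"
      "real (card (dbdom D0)) \<le> real v + 2 * real k * real v / \<epsilon>"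
      using exists_small_db_close_in_dvec[OF schema(1) True[unfolded T_def] classC DC hD closed]
        N \<open>ks i < k\<close> eps unfolding T_def by blast
    moreover have "0 < c" if "0 < v"
      using \<open>v \<in> V\<close> that True unfolding V_def c_def by (auto simp: card_gt_0_iff)
    then have "real v + 2 * real k * real v / \<epsilon> \<le> real (k * v) * (3 * real c * real k * real v / \<epsilon> + 2)"
      using eps by (intro le_size_bound) (auto simp: k_def)
    ultimately show ?thesis
      using classC unfolding Let_def T_def[symmetric] V_def[symmetric] c_def[symmetric] k_def[symmetric]
        v_def[symmetric] ctypes_def by (intro exI[of _ D0]) auto
  qed
qed

end
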